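(* Let $\mathcal{G}=\langle\mathbb{V},\mathbb{E}\rangle$ and the bijection $e$ be as in the context, and let $\pi$ be an $\mathcal{H}^{(\ast)}$-partition of $\mathcal{P}(\mathcal{G},e)$ in which every gadget $\mathcal{N}_v$, $v\in\mathbb{V}$, is well-oriented. Then $\{\langle v,u\rangle:\{\langle v,u\rangle\}\in\pi\}$ (the set of arcs of $\mathcal{G}$ which, as vertices of $\mathcal{P}(\mathcal{G},e)$, form singleton blocks of $\pi$) is a feedback arc set of $\mathcal{G}$ of size at most $|\pi|-|\mathbb{V}|\cdot(|\mathbb{E}|+1)$.
   Context: Standing assumption: $\mathcal{G}=\langle\mathbb{V},\mathbb{E}\rangle$ is a finite directed graph with $\mathbb{V}\ne\emptyset$, without self-loops, in which every vertex has in-degree $1$ or out-degree $1$; let $m=|\mathbb{E}|$ and let $e:\mathbb{E}\to\{1,\dots,m\}$ be a bijection. A feedback arc set of $\mathcal{G}$ is a subset of $\mathbb{E}$ meeting every directed cycle. For $v\in\mathbb{V}$ the gadget $\mathcal{N}_v=\langle\mathcal{V}_v,\mathcal{E}_v\rangle$ has vertices $\mathcal{V}_v=\{v_{i,j}:0\le i,j\le m\}$ (distinct for distinct $v$) and arcs $\mathcal{E}_v=\{\langle v_{i,j},v_{i,j+1}\rangle:0\le i\le m,0\le j<m\}\cup\{\langle v_{i,j},v_{i+1,j}\rangle:0\le i<m,0\le j\le m\}$. Let $\mathcal{L}_v=\{\{v_{i,0},\dots,v_{i,m}\}:0\le i\le m\}$ and $\mathcal{R}_v=\{\{v_{0,i},\dots,v_{m,i}\}:0\le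 i\le m\}$. The digraph $\mathcal{P}(\mathcal{G},e)$ has vertex set $\bigcup_{v\in\mathbb{V}}\mathcal{V}_v\cup\mathbb{E}$ (each arc of $\mathcal{G}$ is also a vertex) and arc set $\bigcup_{v\in\mathbb{V}}\mathcal{E}_v\cup\{\langle\langle v,u\rangle,v_{e(\langle v,u\rangle),0}\rangle:\langle v,u\rangle\in\mathbb{E}\}\cup\{\langle\langle v,u\rangle,u_{0,e(\langle v,u\rangle)}\rangle:\langle v,u\rangle\in\mathbb{E}\}$; it is a DAG. For a DAG $G$, a partition $\pi$ of its vertex set is an $\mathcal{H}^{(\ast)}$-partition if every induced subgraph $G[P]$, $P\in\pi$, has a directed Hamiltonian path and the quotient digraph $G/\pi$ (vertex set $\pi$, arc $\langle P,Q\rangle$ for $P\ne Q$ whenever some arc of $G$ goes from $P$ to $Q$) is acyclic. For such $\pi$ of $\mathcal{P}(\mathcal{G},e)$ and $v\in\mathbb{V}$, let $\pi|_{\mathcal{N}_v}=\{P\cap\mathcal{V}_v:P\in\pi,\ P\cap\mathcal{V}_v\ne\emptyset\}$; the gadget $\mathcal{N}_v$ is well-oriented in $\pi$ if $\pi|_{\mathcal{N}_v}=\mathcal{L}_v$ or $\pi|_{\mathcal{N}_v}=\mathcal{R}_v$. *)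

theory Defs
  imports Main
begin

definition indeg :: "('v \<times> 'v) set \<Rightarrow> 'v \<Rightarrow> nat" where
  "indeg E v = card {u. (u, v) \<in> E}"

definition outdeg :: "('v \<times> 'v) set \<Rightarrow> 'v \<Rightarrow> nat" where
  "outdeg E v = card {u. (v, u) \<in> E}"

definition std_graph :: "'v set \<Rightarrow> ('v \<times> 'v) set \<Rightarrow> bool" where
  "std_graph V E \<longleftrightarrow> finite V \<and> V \<noteq> {} \<and> E \<subseteq> V \<times> V \<and>
     (\<forall>v. (v, v) \<notin> E) \<and> (\<forall>v\<in>V. indeg E v = 1 \<or> outdeg E v = 1)"

definition dir_cycle :: "('v \<times> 'v) set \<Rightarrow> 'v list \<Rightarrow> bool" where
  "dir_cycle E cs \<longleftrightarrow> cs \<noteq> [] \<and> distinct cs \<and>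
     (\<forall>i < length cs. (cs ! i, cs ! (Suc i mod length cs)) \<in> E)"

definition cycle_arcs :: "'v list \<Rightarrow> ('v \<times> 'v) set" where
  "cycle_arcs cs = {(cs ! i, cs ! (Suc i mod length cs)) | i. i < length cs}"

definition feedback_arc_set :: "('v \<times> 'v) set \<Rightarrow> ('v \<times> 'v) set \<Rightarrow> bool" where
  "feedback_arc_set E F \<longleftrightarrow> F \<subseteq> E \<and>
     (\<forall>cs. dir_cycle E cs \<longrightarrow> F \<inter> cycle_arcs cs \<noteq> {})"

(* vertices of P(G,e): gadget vertices v_{i,j} and arcs of G *)
datatype 'v pnode = Grid 'v nat nat | ArcN "'v \<times> 'v"

definition gadget_verts :: "nat \<Rightarrow> 'v \<Rightarrow> 'v pnode set" where
  "gadget_verts m v = {Grid v i j | i j. i \<le> m \<and> j \<le> m}"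

definition gadget_arcs :: "nat \<Rightarrow> 'v \<Rightarrow> ('v pnode \<times> 'v pnode) set" where
  "gadget_arcs m v =
     {(Grid v i j, Grid v i (Suc j)) | i j. i \<le> m \<and> j < m} \<union>
     {(Grid v i j, Grid v (Suc i) j) | i j. i < m \<and> j \<le> m}"

definition gadget_L :: "nat \<Rightarrow> 'v \<Rightarrow> 'v pnode set set" where
  "gadget_L m v = {{Grid v i j | j. j \<le> m} | i. i \<le> m}"

definition gadget_R :: "nat \<Rightarrow> 'v \<Rightarrow> 'v pnode set set" where
  "gadget_R m v = {{Grid v j i | j. j \<le> m} | i. i \<le> m}"

definition P_verts :: "'v set \<Rightarrow> ('v \<times> 'v) set \<Rightarrow> 'v pnode set" where
  "P_verts V E = (\<Union>v\<in>V. gadget_verts (card E) v) \<union> ArcN ` E"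

definition P_arcs :: "'v set \<Rightarrow> ('v \<times> 'v) set \<Rightarrow> ('v \<times> 'v \<Rightarrow> nat)
    \<Rightarrow> ('v pnode \<times> 'v pnode) set" where
  "P_arcs V E e = (\<Union>v\<in>V. gadget_arcs (card E) v) \<union>
     {(ArcN (v, u), Grid v (e (v, u)) 0) | v u. (v, u) \<in> E} \<union>
     {(ArcN (v, u), Grid u 0 (e (v, u))) | v u. (v, u) \<in> E}"

definition is_partition :: "'a set set \<Rightarrow> 'a set \<Rightarrow> bool" where
  "is_partition \<pi> X \<longleftrightarrow> \<Union>\<pi> = X \<and> {} \<notin> \<pi> \<and>
     (\<forall>P\<in>\<pi>. \<forall>Q\<in>\<pi>. P \<noteq> Q \<longrightarrow> P \<inter> Q = {})"

definition has_ham_path :: "('a \<times> 'a) set \<Rightarrow> 'a set \<Rightarrow> bool" where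
  "has_ham_path Es P \<longleftrightarrow> (\<exists>xs. distinct xs \<and> set xs = P \<and>
     (\<forall>i. Suc i < length xs \<longrightarrow> (xs ! i, xs ! Suc i) \<in> Es))"

definition quotient_arcs :: "('a \<times> 'a) set \<Rightarrow> 'a set set \<Rightarrow> ('a set \<times> 'a set) set" where
  "quotient_arcs Es \<pi> = {(P, Q). P \<in> \<pi> \<and> Q \<in> \<pi> \<and> P \<noteq> Q \<and>
     (\<exists>x\<in>P. \<exists>y\<in>Q. (x, y) \<in> Es)}"

definition H_star_partition :: "'a set \<Rightarrow> ('a \<times> 'a) set \<Rightarrow> 'a set set \<Rightarrow> bool" where
  "H_star_partition Vs Es \<pi> \<longleftrightarrow> is_partition \<pi> Vs \<and>
     (\<forall>P\<in>\<pi>. has_ham_path Es P) \<and> acyclic (quotient_arcs Es \<pi>)"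

definition restrict_partition :: "'a set set \<Rightarrow> 'a set \<Rightarrow> 'a set set" where
  "restrict_partition \<pi> S = {P \<inter> S | P. P \<in> \<pi> \<and> P \<inter> S \<noteq> {}}"

definition well_oriented :: "nat \<Rightarrow> 'v pnode set set \<Rightarrow> 'v \<Rightarrow> bool" where
  "well_oriented m \<pi> v \<longleftrightarrow>
     restrict_partition \<pi> (gadget_verts m v) = gadget_L m v \<or>
     restrict_partition \<pi> (gadget_verts m v) = gadget_R m v"

end

theory Submission
  imports Defs
begin

text \<open>
  An arc vertex \<open>\<langle>v,u\<rangle>\<close> has no incoming arcs, so it starts the Hamiltonian path of its block.
  Unless the block is a singleton, the path continues to \<open>v\<^sub>e\<^sub>,\<^sub>0\<close> or to \<open>u\<^sub>0\<^sub>,\<^sub>e\<close>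
  (\<open>e = e\<langle>v,u\<rangle>\<close>), and since the block cannot contain a second source \<open>w\<^sub>0\<^sub>,\<^sub>0\<close>, the gadget of
  \<open>v\<close> is then split into rows, resp. the gadget of \<open>u\<close> into columns. Along a cycle of the graph
  without singleton arcs all gadgets are therefore split the same way, and the grid paths inside
  the gadgets lead from each arc block to the next one (rows) or to the previous one (columns),
  producing a cycle in the quotient. For the bound, every gadget meets \<open>|\<E>| + 1\<close> blocks; as
  gadgets are closed under successors, these blocks lie in a single gadget and are no arc
  singletons.
\<close>

lemma trancl_around_cycle:
  assumes "0 < k" and "\<forall>i<k. (f i, f (Suc i mod k)) \<in> r\<^sup>+"
  shows "(f 0, f 0) \<in> r\<^sup>+"
proof -
  have "(f 0, f (j mod k)) \<in> r\<^sup>+" if "0 < j" "j \<le> k" for j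
    using that
  proof (induction j)
    case (Suc j)
    have step: "(f j, f (Suc j mod k)) \<in> r\<^sup>+"
      using assms(2) Suc.prems by auto
    show ?case
    proof (cases j)
      case 0
      then show ?thesis using step by simp
    next
      case (Suc j')
      then have "(f 0, f j) \<in> r\<^sup>+" using Suc.IH \<open>Suc j \<le> k\<close> by simp
      then show ?thesis using step by (meson trancl_trans)
    qed
  qed simp
  from this[of k] assms(1) show ?thesis by simp
qed

lemma mod_cycle_invariant:
  assumes "j < k" and "P j" and "\<forall>i<k. P i \<longrightarrow> P (Suc i mod k)" and "i < k"
  shows "P i"
proof -
  have "P ((j + t) mod k)" for t
  proof (induction t)
    case (Suc t)
    have "(j + Suc t) mod k = Suc ((j + t) mod k) mod k" by (simp add: mod_Suc_eq)
    moreover have "(j + t) mod k < k" using assms(1) by simp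
    ultimately show ?case using Suc assms(3) by metis
  qed (use assms in simp)
  from this[of "i + k - j"] show ?thesis using assms by simp
qed

lemma cycle_arcs_subset: "dir_cycle E cs \<Longrightarrow> cycle_arcs cs \<subseteq> E"
  unfolding dir_cycle_def cycle_arcs_def by blast

lemma ham_path_source_first:
  assumes "\<forall>i. Suc i < length xs \<longrightarrow> (xs ! i, xs ! Suc i) \<in> Es"
    and "x \<in> set xs" and "\<And>z. (z, x) \<notin> Es"
  shows "xs ! 0 = x"
proof -
  obtain k where k: "k < length xs" "xs ! k = x" using assms(2) by (meson in_set_conv_nth)
  then show ?thesis
    using assms(1,3) by (cases k) auto
qed

lemma has_ham_path_source_unique:
  assumes "has_ham_path Es P" and "x \<in> P" "y \<in> P"
    and "\<And>z. (z, x) \<notin> Es" "\<And>z. (z, y) \<notin> Es"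
  shows "x = y"
  using assms ham_path_source_first unfolding has_ham_path_def by metis

lemma has_ham_path_source_successor:
  assumes "has_ham_path Es P" and "x \<in> P" "P \<noteq> {x}" and "\<And>z. (z, x) \<notin> Es"
  shows "\<exists>y\<in>P. (x, y) \<in> Es"
proof -
  obtain xs where xs: "distinct xs" "set xs = P"
      "\<forall>i. Suc i < length xs \<longrightarrow> (xs ! i, xs ! Suc i) \<in> Es"
    using assms(1) by (auto simp: has_ham_path_def)
  have first: "xs ! 0 = x" using ham_path_source_first xs assms(2,4) by metis
  have "\<not> length xs < 2"
  proof
    assume "length xs < 2"
    then have "set xs \<subseteq> {xs ! 0}"
      by (auto simp: in_set_conv_nth less_2_cases_iff)
    then show False using xs(2) first assms(2,3) by auto
  qed
  then have "(x, xs ! 1) \<in> Es" "xs ! 1 \<in> P"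
    using xs(2,3) first by auto
  then show ?thesis by blast
qed

lemma ham_path_stays_in_closed_set:
  assumes "\<forall>i. Suc i < length xs \<longrightarrow> (xs ! i, xs ! Suc i) \<in> Es"
    and "\<And>x y. x \<in> S \<Longrightarrow> (x, y) \<in> Es \<Longrightarrow> y \<in> S"
    and "xs ! p \<in> S" and "p \<le> q" "q < length xs"
  shows "xs ! q \<in> S"
  using assms(4,5)
proof (induction q rule: dec_induct)
  case (step q)
  then show ?case using assms(1,2) by simp
qed (use assms(3) in simp)

lemma has_ham_path_closed_sets_meet:
  assumes "has_ham_path Es P"
    and "\<And>x y. x \<in> S \<Longrightarrow> (x, y) \<in> Es \<Longrightarrow> y \<in> S"
    and "\<And>x y. x \<in> T \<Longrightarrow> (x, y) \<in> Es \<Longrightarrow> y \<in> T"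
    and "P \<inter> S \<noteq> {}" "P \<inter> T \<noteq> {}"
  shows "S \<inter> T \<noteq> {}"
proof -
  obtain xs where xs: "set xs = P" "\<forall>i. Suc i < length xs \<longrightarrow> (xs ! i, xs ! Suc i) \<in> Es"
    using assms(1) by (auto simp: has_ham_path_def)
  obtain p q where pq: "p < length xs" "xs ! p \<in> S" "q < length xs" "xs ! q \<in> T"
    using assms(4,5) xs(1) by (metis disjoint_iff in_set_conv_nth)
  show ?thesis
  proof (cases "p \<le> q")
    case True
    then have "xs ! q \<in> S"
      using ham_path_stays_in_closed_set[of xs Es S p q] xs(2) assms(2) pq by blast
    then show ?thesis using pq by blast
  next
    case False
    then have "xs ! p \<in> T"
      using ham_path_stays_in_closed_set[of xs Es T q p] xs(2) assms(3) pq by simp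
    then show ?thesis using pq by blast
  qed
qed

lemma quotient_arcs_rtrancl:
  assumes "is_partition \<pi> Vs" and "Es \<subseteq> Vs \<times> Vs" and "(x, y) \<in> Es\<^sup>*"
    and "P \<in> \<pi>" "x \<in> P" and "P' \<in> \<pi>" "y \<in> P'"
  shows "(P, P') \<in> (quotient_arcs Es \<pi>)\<^sup>*"
  using assms(3,6,7)
proof (induction arbitrary: P' rule: rtrancl_induct)
  case base
  then have "P = P'" using assms(1,4,5) unfolding is_partition_def by blast
  then show ?case by simp
next
  case (step y z)
  obtain P'' where P'': "P'' \<in> \<pi>" "y \<in> P''"
    using step.hyps(2) assms(1,2) by (auto simp: is_partition_def)
  have "(P'', P') \<in> (quotient_arcs Es \<pi>)\<^sup>="
    using P'' step.hyps(2) step.prems by (auto simp: quotient_arcs_def)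
  then show ?case using step.IH[OF P''] by (auto intro: rtrancl_into_rtrancl)
qed

lemma row_in_block:
  assumes "restrict_partition \<pi> (gadget_verts m v) = gadget_L m v"
    and "B \<in> \<pi>" "Grid v i j \<in> B" and "i \<le> m" "j \<le> m" "j' \<le> m"
  shows "Grid v i j' \<in> B"
proof -
  have "B \<inter> gadget_verts m v \<in> gadget_L m v"
    using assms unfolding restrict_partition_def gadget_verts_def by blast
  then obtain i' where "B \<inter> gadget_verts m v = {Grid v i' l | l. l \<le> m}"
    unfolding gadget_L_def by blast
  moreover have "Grid v i j \<in> B \<inter> gadget_verts m v"
    using assms by (auto simp: gadget_verts_def)
  ultimately show ?thesis using assms(6) by auto
qed

lemma column_in_block:
  assumes "restrict_partition \<pi> (gadget_verts m v) = gadget_R m v"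
    and "B \<in> \<pi>" "Grid v i j \<in> B" and "i \<le> m" "j \<le> m" "i' \<le> m"
  shows "Grid v i' j \<in> B"
proof -
  have "B \<inter> gadget_verts m v \<in> gadget_R m v"
    using assms unfolding restrict_partition_def gadget_verts_def by blast
  then obtain j' where "B \<inter> gadget_verts m v = {Grid v l j' | l. l \<le> m}"
    unfolding gadget_R_def by blast
  moreover have "Grid v i j \<in> B \<inter> gadget_verts m v"
    using assms by (auto simp: gadget_verts_def)
  ultimately show ?thesis using assms(6) by auto
qed

lemma card_gadget_L: "card (gadget_L m v) = Suc m"
proof -
  have "gadget_L m v = (\<lambda>i. {Grid v i j | j. j \<le> m}) ` {..m}"
    by (auto simp: gadget_L_def)
  moreover have "inj_on (\<lambda>i. {Grid v i j | j. j \<le> m}) {..m}"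
    by (rule inj_onI) blast
  ultimately show ?thesis by (simp add: card_image)
qed

lemma card_gadget_R: "card (gadget_R m v) = Suc m"
proof -
  have "gadget_R m v = (\<lambda>i. {Grid v j i | j. j \<le> m}) ` {..m}"
    by (auto simp: gadget_R_def)
  moreover have "inj_on (\<lambda>i. {Grid v j i | j. j \<le> m}) {..m}"
    by (rule inj_onI) blast
  ultimately show ?thesis by (simp add: card_image)
qed

lemma finite_gadget_verts: "finite (gadget_verts m v)"
proof -
  have "gadget_verts m v = (\<lambda>(i, j). Grid v i j) ` ({..m} \<times> {..m})"
    by (auto simp: gadget_verts_def)
  then show ?thesis by simp
qed

locale well_oriented_H_partition =
  fixes V :: "'v set" and E :: "('v \<times> 'v) set"
    and e :: "'v \<times> 'v \<Rightarrow> nat" and \<pi> :: "'v pnode set set"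
  assumes std: "std_graph V E"
    and bij: "bij_betw e E {1..card E}"
    and H: "H_star_partition (P_verts V E) (P_arcs V E e) \<pi>"
    and wo: "\<forall>v\<in>V. well_oriented (card E) \<pi> v"
begin

abbreviation "m \<equiv> card E"
abbreviation "Vs \<equiv> P_verts V E"
abbreviation "Es \<equiv> P_arcs V E e"

definition row_oriented :: "'v \<Rightarrow> bool" where
  "row_oriented v \<longleftrightarrow> restrict_partition \<pi> (gadget_verts m v) = gadget_L m v"

lemma finite_V: "finite V" and arcs_in_V: "E \<subseteq> V \<times> V" and no_loop: "(v, v) \<notin> E"
  using std by (auto simp: std_graph_def)

lemma finite_E: "finite E"
  using finite_V arcs_in_V by (meson finite_SigmaI finite_subset)

lemma label_range: "a \<in> E \<Longrightarrow> 1 \<le> e a \<and> e a \<le> m"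
  using bij_betw_apply[OF bij] by auto

lemma partition: "is_partition \<pi> Vs"
  and block_ham_path: "B \<in> \<pi> \<Longrightarrow> has_ham_path Es B"
  and acyclic_quotient: "acyclic (quotient_arcs Es \<pi>)"
  using H by (auto simp: H_star_partition_def)

lemma block_subset: "B \<in> \<pi> \<Longrightarrow> B \<subseteq> Vs"
  using partition by (auto simp: is_partition_def)

lemma block_unique: "B \<in> \<pi> \<Longrightarrow> B' \<in> \<pi> \<Longrightarrow> x \<in> B \<Longrightarrow> x \<in> B' \<Longrightarrow> B = B'"
  using partition by (auto simp: is_partition_def)

lemma block_exists: "x \<in> Vs \<Longrightarrow> \<exists>B\<in>\<pi>. x \<in> B"
  using partition by (auto simp: is_partition_def)

lemma finite_partition: "finite \<pi>"
proof -
  have "finite Vs"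
    using finite_V finite_E finite_gadget_verts by (auto simp: P_verts_def)
  moreover have "\<pi> \<subseteq> Pow Vs" using block_subset by auto
  ultimately show ?thesis by (meson finite_Pow_iff finite_subset)
qed

lemma Grid_in_Vs: "Grid v i j \<in> Vs \<longleftrightarrow> v \<in> V \<and> i \<le> m \<and> j \<le> m"
  by (auto simp: P_verts_def gadget_verts_def)

lemma arcs_in_Vs: "Es \<subseteq> Vs \<times> Vs"
  using arcs_in_V label_range
  by (fastforce simp: P_arcs_def gadget_arcs_def P_verts_def gadget_verts_def)

lemma no_arc_into_ArcN: "(x, ArcN a) \<notin> Es"
  by (auto simp: P_arcs_def gadget_arcs_def)

lemma no_arc_into_corner: "(x, Grid v 0 0) \<notin> Es"
  using label_range by (fastforce simp: P_arcs_def gadget_arcs_def)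

lemma arc_from_ArcN:
  "(ArcN a, y) \<in> Es \<Longrightarrow> y = Grid (fst a) (e a) 0 \<or> y = Grid (snd a) 0 (e a)"
  by (auto simp: P_arcs_def gadget_arcs_def)

lemma gadget_successor_closed: "x \<in> gadget_verts m v \<Longrightarrow> (x, y) \<in> Es \<Longrightarrow> y \<in> gadget_verts m v"
  by (auto simp: P_arcs_def gadget_arcs_def gadget_verts_def)

lemma column_path:
  assumes "u \<in> V" "i \<le> i'" "i' \<le> m" "j \<le> m"
  shows "(Grid u i j, Grid u i' j) \<in> Es\<^sup>*"
  using assms(2,3)
proof (induction i' rule: dec_induct)
  case (step i')
  then have "(Grid u i' j, Grid u (Suc i') j) \<in> Es"
    using assms(1,4) by (auto simp: P_arcs_def gadget_arcs_def)
  then show ?case using step by (meson Suc_leD rtrancl.rtrancl_into_rtrancl)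
qed simp

lemma row_path:
  assumes "u \<in> V" "j \<le> j'" "j' \<le> m" "i \<le> m"
  shows "(Grid u i j, Grid u i j') \<in> Es\<^sup>*"
  using assms(2,3)
proof (induction j' rule: dec_induct)
  case (step j')
  then have "(Grid u i j', Grid u i (Suc j')) \<in> Es"
    using assms(1,4) by (auto simp: P_arcs_def gadget_arcs_def)
  then show ?case using step by (meson Suc_leD rtrancl.rtrancl_into_rtrancl)
qed simp

lemma blocks_reachable:
  assumes "(x, y) \<in> Es\<^sup>*" "B \<in> \<pi>" "x \<in> B" "B' \<in> \<pi>" "y \<in> B'"
  shows "(B, B') \<in> (quotient_arcs Es \<pi>)\<^sup>*"
  using assms by (rule quotient_arcs_rtrancl[OF partition arcs_in_Vs])

lemma same_row_in_block:
  assumes "row_oriented v" "B \<in> \<pi>" "Grid v i j \<in> B" "j' \<le> m"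
  shows "Grid v i j' \<in> B"
proof -
  have "Grid v i j \<in> Vs" using assms(2,3) block_subset by blast
  then have "i \<le> m" "j \<le> m" by (simp_all add: Grid_in_Vs)
  with assms show ?thesis
    unfolding row_oriented_def by (metis row_in_block)
qed

lemma same_column_in_block:
  assumes "\<not> row_oriented v" "B \<in> \<pi>" "Grid v i j \<in> B" "i' \<le> m"
  shows "Grid v i' j \<in> B"
proof -
  have "Grid v i j \<in> Vs" using assms(2,3) block_subset by blast
  then have "v \<in> V" "i \<le> m" "j \<le> m" by (simp_all add: Grid_in_Vs)
  then have "restrict_partition \<pi> (gadget_verts m v) = gadget_R m v"
    using wo assms(1) by (auto simp: well_oriented_def row_oriented_def)
  with assms(2-4) \<open>i \<le> m\<close> \<open>j \<le> m\<close> show ?thesis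
    by (metis column_in_block)
qed

lemma block_in_one_gadget:
  assumes "B \<in> \<pi>" "Grid v i j \<in> B" "Grid w k l \<in> B"
  shows "v = w"
proof -
  have "Grid v i j \<in> Vs" "Grid w k l \<in> Vs"
    using assms block_subset by blast+
  then have "i \<le> m" "j \<le> m" "k \<le> m" "l \<le> m"
    by (simp_all add: Grid_in_Vs)
  have "gadget_verts m v \<inter> gadget_verts m w \<noteq> {}"
  proof (rule has_ham_path_closed_sets_meet[OF block_ham_path[OF assms(1)]])
    show "B \<inter> gadget_verts m v \<noteq> {}" "B \<inter> gadget_verts m w \<noteq> {}"
      using assms(2,3) \<open>i \<le> m\<close> \<open>j \<le> m\<close> \<open>k \<le> m\<close> \<open>l \<le> m\<close>
      unfolding gadget_verts_def by blast+
  qed (fact gadget_successor_closed)+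
  then show ?thesis unfolding gadget_verts_def by blast
qed

lemma arc_block_continues:
  assumes "(v, u) \<in> E" "B \<in> \<pi>" "ArcN (v, u) \<in> B" "B \<noteq> {ArcN (v, u)}"
  shows "row_oriented v \<and> Grid v (e (v, u)) 0 \<in> B \<or>
    \<not> row_oriented u \<and> Grid u 0 (e (v, u)) \<in> B"
proof -
  have ham: "has_ham_path Es B" using block_ham_path[OF assms(2)] .
  obtain y where y: "y \<in> B" "(ArcN (v, u), y) \<in> Es"
    using has_ham_path_source_successor[OF ham assms(3,4) no_arc_into_ArcN] by blast
  have no_corner: "Grid w 0 0 \<notin> B" for w
  proof
    assume "Grid w 0 0 \<in> B"
    then have "ArcN (v, u) = Grid w 0 0"
      using has_ham_path_source_unique[OF ham assms(3)] no_arc_into_ArcN no_arc_into_corner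
      by blast
    then show False by simp
  qed
  from arc_from_ArcN[OF y(2)]
  consider "y = Grid v (e (v, u)) 0" | "y = Grid u 0 (e (v, u))" by auto
  then show ?thesis
  proof cases
    case 1
    then have "row_oriented v"
      using same_column_in_block[OF _ assms(2), of v "e (v, u)" 0 0] y(1) no_corner by auto
    then show ?thesis using 1 y(1) by simp
  next
    case 2
    then have "\<not> row_oriented u"
      using same_row_in_block[OF _ assms(2), of u 0 "e (v, u)" 0] y(1) no_corner by auto
    then show ?thesis using 2 y(1) by simp
  qed
qed

lemma block_ArcN_unique:
  assumes "B \<in> \<pi>" "ArcN a \<in> B" "ArcN b \<in> B"
  shows "a = b"
  using has_ham_path_source_unique[OF block_ham_path[OF assms(1)] assms(2,3)] no_arc_into_ArcN
  by blast

text \<open>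
  For consecutive arcs \<open>\<langle>v,u\<rangle>, \<langle>u,w\<rangle>\<close> both links below run through the grid vertex
  \<open>u\<^sub>i\<^sub>,\<^sub>j\<close> with \<open>i = e\<langle>u,w\<rangle>\<close>, \<open>j = e\<langle>v,u\<rangle>\<close>: it lies in row \<open>i\<close> and in column \<open>j\<close>.
\<close>

lemma arc_blocks_linked_by_row:
  assumes "(v, u) \<in> E" "(u, w) \<in> E" "row_oriented u"
    and "B \<in> \<pi>" "ArcN (v, u) \<in> B" and "B' \<in> \<pi>" "ArcN (u, w) \<in> B'" "Grid u (e (u, w)) 0 \<in> B'"
  shows "(B, B') \<in> (quotient_arcs Es \<pi>)\<^sup>+"
proof -
  let ?x = "Grid u (e (u, w)) (e (v, u))"
  have u: "u \<in> V" using assms(1) arcs_in_V by auto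
  have labels: "e (v, u) \<le> m" "e (u, w) \<le> m" using label_range assms(1,2) by auto
  have "(ArcN (v, u), Grid u 0 (e (v, u))) \<in> Es" using assms(1) by (auto simp: P_arcs_def)
  moreover have "(Grid u 0 (e (v, u)), ?x) \<in> Es\<^sup>*" using column_path u labels by simp
  ultimately have path: "(ArcN (v, u), ?x) \<in> Es\<^sup>*" by (rule converse_rtrancl_into_rtrancl)
  obtain B'' where B'': "B'' \<in> \<pi>" "?x \<in> B''"
    using block_exists u labels Grid_in_Vs by blast
  then have "Grid u (e (u, w)) 0 \<in> B''" using same_row_in_block assms(3) by blast
  then have "B'' = B'" using block_unique B''(1) assms(6,8) by blast
  then have "(B, B') \<in> (quotient_arcs Es \<pi>)\<^sup>*"
    using blocks_reachable[OF path assms(4,5)] B'' by simp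
  moreover have "B \<noteq> B'"
    using block_ArcN_unique[OF assms(4,5), of "(u, w)"] assms(1,7) no_loop by auto
  ultimately show ?thesis by (auto dest: rtranclD)
qed

lemma arc_blocks_linked_by_column:
  assumes "(v, u) \<in> E" "(u, w) \<in> E" "\<not> row_oriented u"
    and "B \<in> \<pi>" "ArcN (v, u) \<in> B" "Grid u 0 (e (v, u)) \<in> B" and "B' \<in> \<pi>" "ArcN (u, w) \<in> B'"
  shows "(B', B) \<in> (quotient_arcs Es \<pi>)\<^sup>+"
proof -
  let ?x = "Grid u (e (u, w)) (e (v, u))"
  have u: "u \<in> V" using assms(1) arcs_in_V by auto
  have labels: "e (v, u) \<le> m" "e (u, w) \<le> m" using label_range assms(1,2) by auto
  have "(ArcN (u, w), Grid u (e (u, w)) 0) \<in> Es" using assms(2) by (auto simp: P_arcs_def)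
  moreover have "(Grid u (e (u, w)) 0, ?x) \<in> Es\<^sup>*" using row_path u labels by simp
  ultimately have path: "(ArcN (u, w), ?x) \<in> Es\<^sup>*" by (rule converse_rtrancl_into_rtrancl)
  obtain B'' where B'': "B'' \<in> \<pi>" "?x \<in> B''"
    using block_exists u labels Grid_in_Vs by blast
  then have "Grid u 0 (e (v, u)) \<in> B''" using same_column_in_block assms(3) by blast
  then have "B'' = B" using block_unique B''(1) assms(4,6) by blast
  then have "(B', B) \<in> (quotient_arcs Es \<pi>)\<^sup>*"
    using blocks_reachable[OF path assms(7,8)] B'' by simp
  moreover have "B' \<noteq> B"
    using block_ArcN_unique[OF assms(4,5), of "(u, w)"] assms(1,8) no_loop by auto
  ultimately show ?thesis by (auto dest: rtranclD)
qed

lemma cycle_contains_singleton_arc: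
  assumes "dir_cycle E cs"
  shows "\<exists>a\<in>cycle_arcs cs. {ArcN a} \<in> \<pi>"
proof (rule ccontr)
  assume no_singleton: "\<not> ?thesis"
  define k where "k = length cs"
  define nx where "nx i = Suc i mod k" for i
  define arc where "arc i = (cs ! i, cs ! nx i)" for i
  have k: "0 < k" using assms by (simp add: dir_cycle_def k_def)
  have nx: "i < k \<Longrightarrow> nx i < k" for i using k by (simp add: nx_def)
  have arc_E: "i < k \<Longrightarrow> arc i \<in> E" for i
    using assms by (simp add: dir_cycle_def k_def arc_def nx_def)
  have not_singleton: "i < k \<Longrightarrow> {ArcN (arc i)} \<notin> \<pi>" for i
    using no_singleton unfolding cycle_arcs_def arc_def nx_def k_def by blast
  have "\<exists>P\<in>\<pi>. ArcN (arc i) \<in> P" if "i < k" for i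
    using block_exists arc_E[OF that] by (simp add: P_verts_def)
  then obtain B where B: "\<And>i. i < k \<Longrightarrow> B i \<in> \<pi> \<and> ArcN (arc i) \<in> B i"
    by metis
  have continues: "row_oriented (cs ! i) \<and> Grid (cs ! i) (e (arc i)) 0 \<in> B i \<or>
      \<not> row_oriented (cs ! nx i) \<and> Grid (cs ! nx i) 0 (e (arc i)) \<in> B i" if "i < k" for i
  proof -
    have "B i \<noteq> {ArcN (arc i)}" using B[OF that] not_singleton[OF that] by metis
    then show ?thesis
      using arc_block_continues[of "cs ! i" "cs ! nx i" "B i"] arc_E[OF that] B[OF that]
      unfolding arc_def by blast
  qed
  have "\<not> row_oriented (cs ! i) \<longrightarrow> \<not> row_oriented (cs ! nx i)" if "i < k" for i
    using continues[OF that] by blast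
  then consider "\<forall>i<k. row_oriented (cs ! i)" | "\<forall>i<k. \<not> row_oriented (cs ! i)"
    using mod_cycle_invariant[of _ k "\<lambda>i. \<not> row_oriented (cs ! i)"] unfolding nx_def by metis
  then show False
  proof cases
    case 1
    have "(B i, B (nx i)) \<in> (quotient_arcs Es \<pi>)\<^sup>+" if i: "i < k" for i
    proof (rule arc_blocks_linked_by_row)
      show "(cs ! i, cs ! nx i) \<in> E" "(cs ! nx i, cs ! nx (nx i)) \<in> E"
        using arc_E i nx unfolding arc_def by auto
      show "Grid (cs ! nx i) (e (cs ! nx i, cs ! nx (nx i))) 0 \<in> B (nx i)"
        using continues[OF nx[OF i]] 1 nx[OF nx[OF i]] unfolding arc_def by auto
    qed (use 1 B i nx in \<open>auto simp: arc_def\<close>)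
    then have "(B 0, B 0) \<in> (quotient_arcs Es \<pi>)\<^sup>+"
      using trancl_around_cycle[OF k] unfolding nx_def by blast
    then show False using acyclic_quotient by (simp add: acyclic_def)
  next
    case 2
    have "(B (nx i), B i) \<in> (quotient_arcs Es \<pi>)\<^sup>+" if i: "i < k" for i
    proof (rule arc_blocks_linked_by_column)
      show "(cs ! i, cs ! nx i) \<in> E" "(cs ! nx i, cs ! nx (nx i)) \<in> E"
        using arc_E i nx unfolding arc_def by auto
      show "Grid (cs ! nx i) 0 (e (cs ! i, cs ! nx i)) \<in> B i"
        using continues[OF i] 2 i unfolding arc_def by auto
    qed (use 2 B i nx in \<open>auto simp: arc_def\<close>)
    then have "\<forall>i<k. (B i, B (nx i)) \<in> ((quotient_arcs Es \<pi>)\<inverse>)\<^sup>+"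
      by (simp add: trancl_converse)
    then have "(B 0, B 0) \<in> ((quotient_arcs Es \<pi>)\<inverse>)\<^sup>+"
      using trancl_around_cycle[OF k] unfolding nx_def by blast
    then show False using acyclic_quotient by (simp add: acyclic_def trancl_converse)
  qed
qed

lemma feedback_arc_set_singleton_arcs: "feedback_arc_set E {a \<in> E. {ArcN a} \<in> \<pi>}"
  unfolding feedback_arc_set_def
proof (intro conjI allI impI)
  fix cs
  assume "dir_cycle E cs"
  then obtain a where "a \<in> cycle_arcs cs" "{ArcN a} \<in> \<pi>"
    using cycle_contains_singleton_arc by blast
  moreover have "a \<in> E" using cycle_arcs_subset \<open>dir_cycle E cs\<close> \<open>a \<in> cycle_arcs cs\<close> by blast
  ultimately show "{a \<in> E. {ArcN a} \<in> \<pi>} \<inter> cycle_arcs cs \<noteq> {}" by blast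
qed simp

definition gadget_blocks :: "'v \<Rightarrow> 'v pnode set set" where
  "gadget_blocks v = {B \<in> \<pi>. B \<inter> gadget_verts m v \<noteq> {}}"

lemma card_gadget_blocks:
  assumes "v \<in> V"
  shows "Suc m \<le> card (gadget_blocks v)"
proof -
  have "card (restrict_partition \<pi> (gadget_verts m v)) = Suc m"
    using wo assms card_gadget_L card_gadget_R unfolding well_oriented_def by metis
  moreover have "restrict_partition \<pi> (gadget_verts m v) = (\<lambda>B. B \<inter> gadget_verts m v) ` gadget_blocks v"
    unfolding restrict_partition_def gadget_blocks_def by blast
  moreover have "finite (gadget_blocks v)"
    using finite_partition by (simp add: gadget_blocks_def)
  ultimately show ?thesis by (metis card_image_le)
qed

lemma gadget_blocks_disjoint: "v \<noteq> w \<Longrightarrow> gadget_blocks v \<inter> gadget_blocks w = {}"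
  using block_in_one_gadget unfolding gadget_blocks_def gadget_verts_def by blast

lemma card_singleton_arcs_bound: "card {a \<in> E. {ArcN a} \<in> \<pi>} + card V * Suc m \<le> card \<pi>"
proof -
  let ?S = "(\<lambda>a. {ArcN a}) ` {a \<in> E. {ArcN a} \<in> \<pi>}"
  let ?G = "\<Union>v\<in>V. gadget_blocks v"
  have finite_G: "finite (gadget_blocks v)" for v
    using finite_partition by (simp add: gadget_blocks_def)
  have "card V * Suc m = (\<Sum>v\<in>V. Suc m)" by simp
  also have "\<dots> \<le> (\<Sum>v\<in>V. card (gadget_blocks v))"
    using card_gadget_blocks by (rule sum_mono)
  also have "\<dots> = card ?G"
    using finite_V finite_G gadget_blocks_disjoint by (intro card_UN_disjoint[symmetric]) auto
  finally have G: "card V * Suc m \<le> card ?G" .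
  have S: "card ?S = card {a \<in> E. {ArcN a} \<in> \<pi>}"
    by (rule card_image) (auto simp: inj_on_def)
  have "?S \<inter> ?G = {}" by (auto simp: gadget_blocks_def gadget_verts_def)
  then have "card (?S \<union> ?G) = card ?S + card ?G"
    using finite_E finite_V finite_G by (intro card_Un_disjoint) auto
  moreover have "card (?S \<union> ?G) \<le> card \<pi>"
    using finite_partition by (intro card_mono) (auto simp: gadget_blocks_def)
  ultimately show ?thesis using S G by linarith
qed

end

theorem lemma5p9:
  fixes V :: "'v set" and E :: "('v \<times> 'v) set"
    and e :: "'v \<times> 'v \<Rightarrow> nat" and \<pi> :: "'v pnode set set"
  assumes "std_graph V E"
    and "bij_betw e E {1..card E}"
    and "H_star_partition (P_verts V E) (P_arcs V E e) \<pi>"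
    and "\<forall>v\<in>V. well_oriented (card E) \<pi> v"
  shows "feedback_arc_set E {a \<in> E. {ArcN a} \<in> \<pi>}
    \<and> int (card {a \<in> E. {ArcN a} \<in> \<pi>}) \<le> int (card \<pi>) - int (card V * (card E + 1))"
proof -
  interpret well_oriented_H_partition V E e \<pi> using assms by unfold_locales
  have "card {a \<in> E. {ArcN a} \<in> \<pi>} + card V * (card E + 1) \<le> card \<pi>"
    using card_singleton_arcs_bound by simp
  then show ?thesis using feedback_arc_set_singleton_arcs by linarith
qed

end
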